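(* Let $\Gamma$ be a finite connected $(G,2)$-distance-transitive graph of square-free order, where $G$ is soluble, and let $F$ be the Fitting subgroup of $G$. If $|F|$ is square-free, then $F$ does not have exactly $2$ orbits on $V(\Gamma)$.
   Context: For $G\le\mathrm{Aut}(\Gamma)$, $\Gamma$ is $(G,2)$-distance-transitive if its diameter is at least $2$, $G$ is vertex-transitive and $G_u$ is transitive on $\Gamma(u)$ and $\Gamma_2(u)$ for every vertex $u$. The Fitting subgroup is the subgroup generated by all nilpotent normal subgroups. *)

theory Defs
  imports "HOL-Algebra.Algebra" "HOL-Computational_Algebra.Squarefree"
begin

definition commutator_set :: "('g, 'b) monoid_scheme \<Rightarrow> 'g set \<Rightarrow> 'g set \<Rightarrow> 'g set" where
  "commutator_set G A B =
     {a \<otimes>\<^bsub>G\<^esub> b \<otimes>\<^bsub>G\<^esub> inv\<^bsub>G\<^esub> a \<otimes>\<^bsub>G\<^esub> inv\<^bsub>G\<^esub> b | a b. a \<in> A \<and> b \<in> B}"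

definition lower_central :: "('g, 'b) monoid_scheme \<Rightarrow> nat \<Rightarrow> 'g set" where
  "lower_central G n = ((\<lambda>K. generate G (commutator_set G K (carrier G))) ^^ n) (carrier G)"

definition nilpotent_grp :: "('g, 'b) monoid_scheme \<Rightarrow> bool" where
  "nilpotent_grp G \<longleftrightarrow> group G \<and> (\<exists>n. lower_central G n = {\<one>\<^bsub>G\<^esub>})"

definition Fitting :: "('g, 'b) monoid_scheme \<Rightarrow> 'g set" where
  "Fitting G = generate G (\<Union>{N. N \<lhd> G \<and> nilpotent_grp (G\<lparr>carrier := N\<rparr>)})"

fun reach :: "('a \<Rightarrow> 'a \<Rightarrow> bool) \<Rightarrow> nat \<Rightarrow> 'a \<Rightarrow> 'a \<Rightarrow> bool" where
  "reach adj 0 u v = (u = v)"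
| "reach adj (Suc n) u v = (\<exists>w. adj u w \<and> reach adj n w v)"

definition sphere :: "'a set \<Rightarrow> ('a \<Rightarrow> 'a \<Rightarrow> bool) \<Rightarrow> nat \<Rightarrow> 'a \<Rightarrow> 'a set" where
  "sphere V adj i u = {v \<in> V. reach adj i u v \<and> (\<forall>j<i. \<not> reach adj j u v)}"

definition simple_graph :: "'a set \<Rightarrow> ('a \<Rightarrow> 'a \<Rightarrow> bool) \<Rightarrow> bool" where
  "simple_graph V adj \<longleftrightarrow>
     (\<forall>x y. adj x y \<longrightarrow> x \<in> V \<and> y \<in> V) \<and> (\<forall>x y. adj x y \<longrightarrow> adj y x) \<and> (\<forall>x. \<not> adj x x)"

definition connected_graph :: "'a set \<Rightarrow> ('a \<Rightarrow> 'a \<Rightarrow> bool) \<Rightarrow> bool" where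
  "connected_graph V adj \<longleftrightarrow> (\<forall>u\<in>V. \<forall>v\<in>V. \<exists>n. reach adj n u v)"

definition aut_group :: "'a set \<Rightarrow> ('a \<Rightarrow> 'a \<Rightarrow> bool) \<Rightarrow> ('a \<Rightarrow> 'a) set \<Rightarrow> bool" where
  "aut_group V adj G \<longleftrightarrow> subgroup G (BijGroup V) \<and>
     (\<forall>g\<in>G. \<forall>x\<in>V. \<forall>y\<in>V. adj (g x) (g y) \<longleftrightarrow> adj x y)"

text \<open>(G,2)-distance-transitivity: diameter at least 2, G vertex-transitive,
  and each vertex stabiliser transitive on Gamma(u) and Gamma_2(u).\<close>
definition dist2_transitive :: "'a set \<Rightarrow> ('a \<Rightarrow> 'a \<Rightarrow> bool) \<Rightarrow> ('a \<Rightarrow> 'a) set \<Rightarrow> bool" where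
  "dist2_transitive V adj G \<longleftrightarrow>
     (\<exists>u\<in>V. \<exists>v\<in>V. \<forall>j\<le>1. \<not> reach adj j u v) \<and>
     (\<forall>u\<in>V. \<forall>v\<in>V. \<exists>g\<in>G. g u = v) \<and>
     (\<forall>u\<in>V. \<forall>i\<in>{1,2}. \<forall>v\<in>sphere V adj i u. \<forall>w\<in>sphere V adj i u.
         \<exists>g\<in>G. g u = u \<and> g v = w)"

definition vertex_orbits :: "('a \<Rightarrow> 'a) set \<Rightarrow> 'a set \<Rightarrow> 'a set set" where
  "vertex_orbits H V = {(\<lambda>h. h v) ` H | v. v \<in> V}"

end

(*
  Since |F| is square-free, two commuting elements of the same prime order p in F generate
  a cyclic group, as otherwise they would generate a subgroup of order p^2. Consequently a
  commutator that commutes with both of its entries is trivial, so every nilpotent normal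
  subgroup, and then F itself, is abelian; and every element of G acts on F by a power map,
  so conjugations by different elements of G commute on F. An abelian normal subgroup of
  square-free order of a transitive group is semiregular.

  Suppose F has exactly two orbits. Arc-transitivity makes them the two parts of a
  bipartition, so Gamma_2(u) lies in the orbit of u. Fix e_0 in F with e_0 u in Gamma_2(u).
  Transitivity of G_u on Gamma_2(u) and semiregularity yield an automorphism c mapping u to a
  neighbour of u and centralising e_0. Every e in F with e u in Gamma_2(u) is conjugate to e_0
  under G_u, so c centralises it as well, and by connectivity these elements generate F.
  Hence c centralises F, so c lies in F because G is soluble; but F preserves the parts of
  the bipartition and c does not.
*)
theory Submission
  imports Defs
begin

section \<open>Commuting elements of prime order in groups of square-free order\<close>

context group
begin

lemma subgroup_nat_pow_closed:
  assumes "subgroup H G" "h \<in> H"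
  shows "h [^] (n::nat) \<in> H"
  using subgroup_int_pow_closed[OF assms, of "int n"] by (simp add: int_pow_int)

lemma nat_pow_commute:
  assumes "a \<in> carrier G" "b \<in> carrier G" "a \<otimes> b = b \<otimes> a"
  shows "a [^] (i::nat) \<otimes> b [^] (j::nat) = b [^] j \<otimes> a [^] i"
proof -
  have "a [^] i \<otimes> b = b \<otimes> a [^] i" using group_commutes_pow assms by blast
  then show ?thesis using group_commutes_pow[of b "a [^] i" j] assms by simp
qed

lemma nat_pow_mod:
  assumes "x \<in> carrier G" "x [^] (p::nat) = \<one>"
  shows "x [^] (n::nat) = x [^] (n mod p)"
proof -
  have "x [^] n = (x [^] p) [^] (n div p) \<otimes> x [^] (n mod p)"
    using assms(1) nat_pow_mult[of x "p * (n div p)" "n mod p"]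
    by (simp add: nat_pow_pow)
  then show ?thesis using assms by simp
qed

lemma pow_coprime_generates:
  assumes d: "d \<in> carrier G" and "d [^] (p::nat) = \<one>" and "coprime m p"
  shows "\<exists>s::nat. d = (d [^] m) [^] s"
proof (cases "m = 0")
  case True
  then have "p = 1" using \<open>coprime m p\<close> by simp
  then have "d = \<one>" using assms by simp
  then show ?thesis by simp
next
  case False
  then obtain s t where st: "m * s = p * t + 1"
    using bezout_nat[of m p] \<open>coprime m p\<close> by auto
  have "(d [^] m) [^] s = d [^] (p * t) \<otimes> d [^] (1::nat)"
    using d by (simp only: nat_pow_pow nat_pow_mult st)
  also have "\<dots> = (d [^] p) [^] t \<otimes> d"
    using d by (simp add: nat_pow_pow)
  finally have "(d [^] m) [^] s = d" using assms by simp
  then show ?thesis by metis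
qed

lemma subgroup_card_dvd:
  assumes "subgroup H G" "subgroup K G" "H \<subseteq> K"
  shows "card H dvd card K"
proof -
  have "subgroup H (G\<lparr>carrier := K\<rparr>)" using subgroup_incl assms by blast
  then have "card (rcosets\<^bsub>G\<lparr>carrier := K\<rparr>\<^esub> H) * card H = card K"
    using group.lagrange[OF subgroup_imp_group[OF assms(2)]] by (simp add: order_def)
  then show ?thesis by (metis dvd_triv_right)
qed

lemma pow_card_subgroup:
  assumes "subgroup K G" "a \<in> K"
  shows "a [^] card K = \<one>"
proof -
  interpret K: group "G\<lparr>carrier := K\<rparr>" using subgroup_imp_group[OF assms(1)] .
  have "a [^]\<^bsub>G\<lparr>carrier := K\<rparr>\<^esub> card K = \<one>"
    using K.pow_order_eq_1 assms(2) by (simp add: order_def)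
  then show ?thesis using nat_pow_consistent[of a "card K" K] by simp
qed

lemma exists_prime_order_power:
  assumes "finite (carrier G)" "x \<in> carrier G" "x \<noteq> \<one>"
  obtains p k :: nat where "Factorial_Ring.prime p" "x [^] (k::nat) \<noteq> \<one>" "(x [^] k) [^] p = \<one>"
proof -
  have "ord x \<noteq> 1" using ord_eq_1 assms by simp
  then obtain p where p: "Factorial_Ring.prime p" "p dvd ord x" using prime_factor_nat by blast
  define k where "k = ord x div p"
  have "ord x = k * p" using p k_def by simp
  moreover have "0 < ord x" using ord_ge_1 assms by fastforce
  ultimately have "0 < k" "k < ord x" using prime_gt_1_nat[OF p(1)] by auto
  then have "x [^] k \<noteq> \<one>" using pow_eq_id assms(2) by (auto dest: dvd_imp_le)
  moreover have "(x [^] k) [^] p = \<one>"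
    using \<open>ord x = k * p\<close> pow_ord_eq_1[OF assms(2)] assms(2) by (simp add: nat_pow_pow)
  ultimately show thesis using that p(1) by blast
qed

lemma commuting_powers_grid_subgroup:
  assumes x: "x \<in> carrier G" and d: "d \<in> carrier G" and xd: "x \<otimes> d = d \<otimes> x"
    and xp: "x [^] (p::nat) = \<one>" and dp: "d [^] p = \<one>" and p: "0 < p"
  shows "subgroup ((\<lambda>(i, j). x [^] i \<otimes> d [^] j) ` ({..<p} \<times> {..<p})) G"
    (is "subgroup ?H G")
proof -
  have mult: "(x [^] i \<otimes> d [^] j) \<otimes> (x [^] i' \<otimes> d [^] j')
      = x [^] ((i + i') mod p) \<otimes> d [^] ((j + j') mod p)" for i j i' j' :: nat
  proof -
    have "(x [^] i \<otimes> d [^] j) \<otimes> (x [^] i' \<otimes> d [^] j') = x [^] i \<otimes> (d [^] j \<otimes> x [^] i') \<otimes> d [^] j'"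
      using x d by (simp add: m_assoc)
    also have "\<dots> = x [^] i \<otimes> (x [^] i' \<otimes> d [^] j) \<otimes> d [^] j'"
      using nat_pow_commute[OF x d xd, of i' j] by simp
    also have "\<dots> = x [^] (i + i') \<otimes> d [^] (j + j')"
      using x d by (simp add: m_assoc flip: nat_pow_mult)
    also have "\<dots> = x [^] ((i + i') mod p) \<otimes> d [^] ((j + j') mod p)"
      using nat_pow_mod[OF x xp, of "i + i'"] nat_pow_mod[OF d dp, of "j + j'"] by simp
    finally show ?thesis .
  qed
  show ?thesis
  proof (rule subgroupI)
    show "?H \<subseteq> carrier G" "?H \<noteq> {}" using x d p by auto
  next
    fix a assume "a \<in> ?H"
    then obtain i j where ij: "i < p" "j < p" "a = x [^] i \<otimes> d [^] j" by auto
    have "(x [^] ((p - i) mod p) \<otimes> d [^] ((p - j) mod p)) \<otimes> a = \<one>"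
      using ij mult[of "(p - i) mod p" "(p - j) mod p" i j] by (simp add: mod_add_left_eq)
    then have "inv a = x [^] ((p - i) mod p) \<otimes> d [^] ((p - j) mod p)"
      using ij x d by (simp add: inv_equality)
    then show "inv a \<in> ?H" using p by auto
  next
    fix a b assume "a \<in> ?H" "b \<in> ?H"
    then obtain i j i' j' :: nat where "a = x [^] i \<otimes> d [^] j" "b = x [^] i' \<otimes> d [^] j'" by auto
    then have "a \<otimes> b = (\<lambda>(i, j). x [^] i \<otimes> d [^] j) ((i + i') mod p, (j + j') mod p)"
      using mult by simp
    then show "a \<otimes> b \<in> ?H" using p by auto
  qed
qed

lemma commuting_powers_grid_inj:
  assumes x: "x \<in> carrier G" and d: "d \<in> carrier G"
    and p: "Factorial_Ring.prime p" and ord: "ord x = p" and dp: "d [^] p = \<one>"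
    and nd: "d \<notin> generate G {x}"
  shows "inj_on (\<lambda>(i, j). x [^] i \<otimes> d [^] j) ({..<p} \<times> {..<p})"
proof -
  have gen: "subgroup (generate G {x}) G" using generate_is_subgroup x by simp
  have x_gen: "x [^] (i::nat) \<in> generate G {x}" for i
    using subgroup_nat_pow_closed[OF gen] generate.incl[of x "{x}" G] by simp
  have no_power: "d [^] m \<notin> generate G {x}" if "0 < m" "m < p" for m
  proof
    assume dm: "d [^] m \<in> generate G {x}"
    have "coprime m p"
      using that p by (metis coprime_commute dvd_imp_le not_le prime_imp_coprime)
    then obtain s :: nat where "d = (d [^] m) [^] s" using pow_coprime_generates[OF d dp] by blast
    then show False using nd subgroup_nat_pow_closed[OF gen dm] by metis
  qed
  have same_j: "j = j'"
    if eq: "x [^] i \<otimes> d [^] j = x [^] i' \<otimes> d [^] j'" and "j' \<le> j" "j < p" for i i' j j' :: nat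
  proof (rule ccontr)
    assume "j \<noteq> j'"
    have "x [^] i \<otimes> d [^] (j - j') \<otimes> d [^] j' = x [^] i' \<otimes> d [^] j'"
      using eq x d \<open>j' \<le> j\<close> by (simp add: m_assoc nat_pow_mult)
    then have "x [^] i \<otimes> d [^] (j - j') = x [^] i'" using x d by (simp add: r_cancel)
    then have "d [^] (j - j') = inv (x [^] i) \<otimes> x [^] i'" using x d by (simp add: inv_solve_left)
    then have "d [^] (j - j') \<in> generate G {x}"
      using x_gen subgroup.m_closed[OF gen] subgroup.m_inv_closed[OF gen] by simp
    then show False using no_power[of "j - j'"] \<open>j \<noteq> j'\<close> that by simp
  qed
  show ?thesis
  proof (rule inj_onI)
    fix a b assume "a \<in> {..<p} \<times> {..<p}" "b \<in> {..<p} \<times> {..<p}"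
      and eq0: "(\<lambda>(i, j). x [^] i \<otimes> d [^] j) a = (\<lambda>(i, j). x [^] i \<otimes> d [^] j) b"
    then obtain i j i' j' where ij: "a = (i, j)" "b = (i', j')" "i < p" "j < p" "i' < p" "j' < p"
      by auto
    with eq0 have eq: "x [^] i \<otimes> d [^] j = x [^] i' \<otimes> d [^] j'" by simp
    have "j = j'" using same_j[OF eq] same_j[OF eq[symmetric]] ij by linarith
    then have "x [^] i = x [^] i'" using eq x d by (simp add: r_cancel)
    then have "i = i'" using ord_inj[OF x] ij ord unfolding inj_on_def by auto
    then show "a = b" using ij \<open>j = j'\<close> by simp
  qed
qed

lemma commuting_order_p_in_cyclic:
  assumes K: "subgroup K G" "finite K" "squarefree (card K)"
    and x: "x \<in> K" and d: "d \<in> K" and xd: "x \<otimes> d = d \<otimes> x"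
    and p: "Factorial_Ring.prime (p::nat)" and xp: "x [^] p = \<one>" and dp: "d [^] p = \<one>"
    and x1: "x \<noteq> \<one>"
  shows "d \<in> generate G {x}"
proof (rule ccontr)
  assume nd: "d \<notin> generate G {x}"
  let ?H = "(\<lambda>(i, j). x [^] i \<otimes> d [^] j) ` ({..<p} \<times> {..<p})"
  have xc: "x \<in> carrier G" and dc: "d \<in> carrier G" using x d subgroup.mem_carrier[OF K(1)] by auto
  have "ord x dvd p" "ord x \<noteq> 1" using xp pow_eq_id ord_eq_1 xc x1 by auto
  then have ord: "ord x = p" using p unfolding prime_nat_iff by blast
  have "x [^] i \<otimes> d [^] j \<in> K" for i j :: nat
    using subgroup.m_closed[OF K(1) subgroup_nat_pow_closed[OF K(1) x] subgroup_nat_pow_closed[OF K(1) d]] .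
  then have "?H \<subseteq> K" by auto
  then have "card ?H dvd card K"
    using subgroup_card_dvd[OF commuting_powers_grid_subgroup[OF xc dc xd xp dp] K(1)] p
    by (simp add: prime_gt_0_nat)
  moreover have "card ?H = p * p"
    using card_image[OF commuting_powers_grid_inj[OF xc dc p ord dp nd]] by simp
  ultimately have "p ^ 2 dvd card K" by (simp add: power2_eq_square)
  then have "is_unit p" using K(3) squarefreeD by blast
  with p show False by simp
qed

end

context group
begin

lemma commutator_one_iff:
  assumes "x \<in> carrier G" "y \<in> carrier G"
  shows "x \<otimes> y \<otimes> inv x \<otimes> inv y = \<one> \<longleftrightarrow> x \<otimes> y = y \<otimes> x"
proof -
  have "x \<otimes> y \<otimes> inv x \<otimes> inv y = (x \<otimes> y) \<otimes> inv (y \<otimes> x)"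
    using assms by (simp add: inv_mult_group m_assoc)
  then show ?thesis using assms by (metis inv_closed m_closed r_inv inv_equality inv_inv)
qed

lemma commutator_conj_pow:
  assumes a: "a \<in> carrier G" and b: "b \<in> carrier G"
    and c: "c = a \<otimes> b \<otimes> inv a \<otimes> inv b" and ca: "c \<otimes> a = a \<otimes> c"
  shows "a [^] (k::nat) \<otimes> b \<otimes> inv (a [^] k) = c [^] k \<otimes> b"
proof (induct k)
  case 0 then show ?case using b by simp
next
  case (Suc k)
  have cc: "c \<in> carrier G" using c a b by simp
  have "a [^] Suc k \<otimes> b \<otimes> inv (a [^] Suc k) = (a \<otimes> a [^] k) \<otimes> b \<otimes> inv (a \<otimes> a [^] k)"
    by (simp only: nat_pow_Suc2[OF a])
  also have "\<dots> = a \<otimes> (a [^] k \<otimes> b \<otimes> inv (a [^] k)) \<otimes> inv a"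
    using a b by (simp add: inv_mult_group m_assoc)
  also have "\<dots> = (a \<otimes> c [^] k) \<otimes> (b \<otimes> inv a)" using Suc a b cc by (simp add: m_assoc)
  also have "\<dots> = c [^] k \<otimes> (a \<otimes> b \<otimes> inv a)"
    using nat_pow_commute[OF a cc ca[symmetric], of 1 k] a b cc by (simp add: m_assoc)
  also have "\<dots> = c [^] Suc k \<otimes> b" using c a b cc by (simp add: m_assoc)
  finally show ?case .
qed

lemma commutator_central_of_order_p_trivial:
  assumes K: "subgroup K G" "finite K" "squarefree (card K)"
    and x: "x \<in> K" and b: "b \<in> K" and d: "d = x \<otimes> b \<otimes> inv x \<otimes> inv b"
    and dx: "d \<otimes> x = x \<otimes> d" and db: "d \<otimes> b = b \<otimes> d"
    and p: "Factorial_Ring.prime (p::nat)" and xp: "x [^] p = \<one>" and dp: "d [^] p = \<one>"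
  shows "d = \<one>"
proof (rule ccontr)
  assume d1: "d \<noteq> \<one>"
  have xc: "x \<in> carrier G" and bc: "b \<in> carrier G" using x b subgroup.mem_carrier[OF K(1)] by auto
  have dc: "d \<in> carrier G" and dK: "d \<in> K"
    using d xc bc x b K(1) by (auto intro!: subgroup.m_closed subgroup.m_inv_closed)
  have "x \<noteq> \<one>" using d d1 bc by auto
  then have "d \<in> generate G {x}" using commuting_order_p_in_cyclic[OF K x dK] dx p xp dp by simp
  moreover have "ord x \<noteq> 0"
    using xp pow_eq_id[OF xc] p by (metis dvd_0_left_iff not_prime_0)
  ultimately obtain i :: nat where i: "d = x [^] i" using generate_pow_nat[OF xc] by auto
  have "b = d [^] i \<otimes> b"
    using commutator_conj_pow[OF xc bc d dx, of i] i dc bc db by (simp add: m_assoc)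
  then have "d [^] i = \<one>" using bc dc by (metis l_one r_cancel nat_pow_closed one_closed)
  moreover have "ord d = p"
    using dp d1 pow_eq_id[OF dc] ord_eq_1[OF dc] p unfolding prime_nat_iff by metis
  ultimately obtain q where "i = p * q" using pow_eq_id[OF dc] by auto
  then have "d = (x [^] p) [^] q" using i xc by (simp add: nat_pow_pow)
  with d1 xp show False by simp
qed

lemma commutator_central_trivial:
  assumes K: "subgroup K G" "finite K" "squarefree (card K)"
    and a: "a \<in> K" and b: "b \<in> K" and c: "c = a \<otimes> b \<otimes> inv a \<otimes> inv b"
    and ca: "c \<otimes> a = a \<otimes> c" and cb: "c \<otimes> b = b \<otimes> c"
  shows "c = \<one>"
proof (rule ccontr)
  assume c1: "c \<noteq> \<one>"
  have ac: "a \<in> carrier G" and bc: "b \<in> carrier G" using a b subgroup.mem_carrier[OF K(1)] by auto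
  have cc: "c \<in> carrier G" using c ac bc by simp
  define N where "N = card K"
  have aN: "a [^] N = \<one>" using pow_card_subgroup[OF K(1) a] N_def by simp
  then have "b = c [^] N \<otimes> b" using commutator_conj_pow[OF ac bc c ca, of N] bc by simp
  then have cN: "c [^] N = \<one>" using bc cc by (metis l_one r_cancel nat_pow_closed one_closed)
  have "ord c \<noteq> 1" using ord_eq_1[OF cc] c1 by simp
  then obtain p where p: "Factorial_Ring.prime p" "p dvd ord c" using prime_factor_nat by blast
  then have "p dvd N" using cN pow_eq_id[OF cc] dvd_trans by blast
  then obtain k where Nk: "N = p * k" by blast
  have pk: "\<not> p dvd k"
  proof
    assume "p dvd k"
    then have "p ^ 2 dvd N" using Nk by (auto simp: power2_eq_square)
    then have "is_unit p" using K(3) N_def squarefreeD by blast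
    with p(1) show False by simp
  qed
  define x d where "x = a [^] k" and "d = c [^] k"
  have xc: "x \<in> carrier G" and dc: "d \<in> carrier G" using x_def d_def ac cc by auto
  have xK: "x \<in> K" using x_def subgroup_nat_pow_closed[OF K(1) a] by simp
  have "x \<otimes> b \<otimes> inv x = d \<otimes> b" using commutator_conj_pow[OF ac bc c ca] x_def d_def by simp
  then have d_comm: "d = x \<otimes> b \<otimes> inv x \<otimes> inv b" using bc dc xc by (simp add: m_assoc)
  have "d \<otimes> x = x \<otimes> d" using nat_pow_commute[OF cc ac ca] x_def d_def by simp
  moreover have "d \<otimes> b = b \<otimes> d" using nat_pow_commute[OF cc bc cb, of k 1] d_def bc by simp
  moreover have "x [^] p = \<one>" "d [^] p = \<one>"
    using aN cN Nk x_def d_def ac cc by (simp_all add: nat_pow_pow mult.commute)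
  ultimately have "d = \<one>"
    using commutator_central_of_order_p_trivial[OF K xK b d_comm] p(1) by blast
  then have "ord c dvd k" using pow_eq_id[OF cc] d_def by simp
  then show False using p(2) pk dvd_trans by blast
qed

end

section \<open>Nilpotent subgroups and the Fitting subgroup\<close>

definition centralizer :: "('g, 'b) monoid_scheme \<Rightarrow> 'g set \<Rightarrow> 'g set" where
  "centralizer G S = {x \<in> carrier G. \<forall>y\<in>S. x \<otimes>\<^bsub>G\<^esub> y = y \<otimes>\<^bsub>G\<^esub> x}"

lemma lower_central_0 [simp]: "lower_central G 0 = carrier G"
  by (simp add: lower_central_def)

lemma lower_central_Suc:
  "lower_central G (Suc n) = generate G (commutator_set G (lower_central G n) (carrier G))"
  by (simp add: lower_central_def)

context group
begin

lemma subgroup_centralizer: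
  assumes "S \<subseteq> carrier G"
  shows "subgroup (centralizer G S) G"
proof (rule subgroupI)
  show "centralizer G S \<subseteq> carrier G" by (auto simp: centralizer_def)
  have "\<one> \<in> centralizer G S" using assms by (auto simp: centralizer_def)
  then show "centralizer G S \<noteq> {}" by blast
next
  fix a assume a: "a \<in> centralizer G S"
  have "inv a \<otimes> y = y \<otimes> inv a" if y: "y \<in> S" for y
  proof -
    have yc: "y \<in> carrier G" using y assms by auto
    have "inv a \<otimes> y = inv a \<otimes> (y \<otimes> a) \<otimes> inv a"
      using a yc by (simp add: centralizer_def m_assoc)
    also have "\<dots> = inv a \<otimes> (a \<otimes> y) \<otimes> inv a" using a y by (simp add: centralizer_def)
    also have "\<dots> = y \<otimes> inv a" using a yc by (simp add: centralizer_def flip: m_assoc)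
    finally show ?thesis .
  qed
  then show "inv a \<in> centralizer G S" using a by (simp add: centralizer_def)
next
  fix a b assume "a \<in> centralizer G S" "b \<in> centralizer G S"
  then show "a \<otimes> b \<in> centralizer G S"
    using assms by (auto simp: centralizer_def m_assoc) (metis m_assoc subsetD)
qed

lemma generate_commute:
  assumes S: "S \<subseteq> carrier G" and comm: "\<And>x y. x \<in> S \<Longrightarrow> y \<in> S \<Longrightarrow> x \<otimes> y = y \<otimes> x"
    and x: "x \<in> generate G S" and y: "y \<in> generate G S"
  shows "x \<otimes> y = y \<otimes> x"
proof -
  have "generate G S \<subseteq> centralizer G S"
    using S comm by (intro generate_subgroup_incl subgroup_centralizer) (auto simp: centralizer_def)
  then have "S \<subseteq> centralizer G (generate G S)"
    using S by (auto simp: centralizer_def)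
  then have "generate G S \<subseteq> centralizer G (generate G S)"
    by (rule generate_subgroup_incl[OF _ subgroup_centralizer[OF generate_incl[OF S]]])
  then show ?thesis using x y by (auto simp: centralizer_def)
qed

lemma lower_central_subset: "lower_central G n \<subseteq> carrier G"
proof (induct n)
  case (Suc n)
  then have "commutator_set G (lower_central G n) (carrier G) \<subseteq> carrier G"
    by (auto simp: commutator_set_def)
  then show ?case using generate_incl by (simp add: lower_central_Suc)
qed simp

lemma nilpotent_grp_class_two:
  assumes N: "subgroup N G" and Z: "subgroup Z G" and Z_central: "Z \<subseteq> centralizer G N"
    and comm: "\<And>a b. a \<in> N \<Longrightarrow> b \<in> N \<Longrightarrow> a \<otimes> b \<otimes> inv a \<otimes> inv b \<in> Z"
  shows "nilpotent_grp (G\<lparr>carrier := N\<rparr>)"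
proof -
  let ?H = "G\<lparr>carrier := N\<rparr>"
  interpret H: group ?H using subgroup_imp_group[OF N] .
  have inv_H: "inv\<^bsub>?H\<^esub> x = inv x" if "x \<in> N" for x using m_inv_consistent[OF N that] .
  have cs: "commutator_set ?H (carrier ?H) (carrier ?H) \<subseteq> Z \<inter> N"
    using comm inv_H N by (auto simp: commutator_set_def subgroup.m_closed subgroup.m_inv_closed)
  have "lower_central ?H 1 = generate ?H (commutator_set ?H (carrier ?H) (carrier ?H))"
    by (simp add: lower_central_Suc)
  also have "\<dots> \<subseteq> Z \<inter> N"
    by (rule H.generate_subgroup_incl[OF cs subgroup_incl[OF subgroups_Inter_pair[OF Z N] N]]) simp
  finally have L1: "lower_central ?H 1 \<subseteq> Z \<inter> N" .
  have "commutator_set ?H (lower_central ?H 1) (carrier ?H) \<subseteq> {\<one>\<^bsub>?H\<^esub>}"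
  proof
    fix c assume "c \<in> commutator_set ?H (lower_central ?H 1) (carrier ?H)"
    then obtain a b where a: "a \<in> lower_central ?H 1" and b: "b \<in> N"
      and c: "c = a \<otimes>\<^bsub>?H\<^esub> b \<otimes>\<^bsub>?H\<^esub> inv\<^bsub>?H\<^esub> a \<otimes>\<^bsub>?H\<^esub> inv\<^bsub>?H\<^esub> b"
      unfolding commutator_set_def by auto
    have ab: "a \<in> Z" "a \<in> N" "b \<in> N" "c = a \<otimes> b \<otimes> inv a \<otimes> inv b"
      using a b c L1 inv_H by auto
    then have "a \<otimes> b = b \<otimes> a" using Z_central by (auto simp: centralizer_def)
    then show "c \<in> {\<one>\<^bsub>?H\<^esub>}"
      using ab commutator_one_iff[of a b] subgroup.mem_carrier[OF N] by simp
  qed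
  then have "lower_central ?H 2 \<subseteq> {\<one>\<^bsub>?H\<^esub>}"
    using H.generate_subgroup_incl[OF _ H.triv_subgroup]
    by (simp add: lower_central_Suc[of ?H 1, simplified] numeral_2_eq_2)
  moreover have "\<one>\<^bsub>?H\<^esub> \<in> lower_central ?H 2"
    using generate.one[of ?H] by (simp add: lower_central_Suc[of ?H 1, simplified] numeral_2_eq_2)
  ultimately have "lower_central ?H 2 = {\<one>\<^bsub>?H\<^esub>}" by blast
  then show ?thesis unfolding nilpotent_grp_def using H.is_group by blast
qed

lemma lower_central_centralizer_step:
  assumes K: "subgroup K G" "finite K" "squarefree (card K)"
    and N: "subgroup N G" "N \<subseteq> K"
    and step: "lower_central (G\<lparr>carrier := N\<rparr>) (Suc j) \<subseteq> centralizer G N"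
  shows "lower_central (G\<lparr>carrier := N\<rparr>) j \<subseteq> centralizer G N"
proof
  let ?H = "G\<lparr>carrier := N\<rparr>"
  interpret H: group ?H using subgroup_imp_group[OF N(1)] .
  fix x assume x: "x \<in> lower_central ?H j"
  have xN: "x \<in> N" using x H.lower_central_subset by auto
  have "x \<otimes> y = y \<otimes> x" if yN: "y \<in> N" for y
  proof -
    define c where "c = x \<otimes> y \<otimes> inv x \<otimes> inv y"
    have "c = x \<otimes>\<^bsub>?H\<^esub> y \<otimes>\<^bsub>?H\<^esub> inv\<^bsub>?H\<^esub> x \<otimes>\<^bsub>?H\<^esub> inv\<^bsub>?H\<^esub> y"
      using m_inv_consistent[OF N(1)] xN yN c_def by simp
    then have "c \<in> commutator_set ?H (lower_central ?H j) (carrier ?H)"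
      using x yN unfolding commutator_set_def by auto
    then have "c \<in> centralizer G N"
      using step by (auto simp: lower_central_Suc intro: generate.incl)
    then have "c = \<one>"
      using commutator_central_trivial[OF K, of x y c] xN yN N(2) c_def
      by (auto simp: centralizer_def)
    then show ?thesis
      using commutator_one_iff xN yN subgroup.mem_carrier[OF N(1)] c_def by simp
  qed
  then show "x \<in> centralizer G N"
    using xN subgroup.mem_carrier[OF N(1)] by (simp add: centralizer_def)
qed

lemma nilpotent_subgroup_abelian:
  assumes K: "subgroup K G" "finite K" "squarefree (card K)"
    and N: "subgroup N G" "N \<subseteq> K" and nil: "nilpotent_grp (G\<lparr>carrier := N\<rparr>)"
  shows "N \<subseteq> centralizer G N"
proof -
  obtain n where "lower_central (G\<lparr>carrier := N\<rparr>) n = {\<one>}"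
    using nil by (auto simp: nilpotent_grp_def)
  then have "lower_central (G\<lparr>carrier := N\<rparr>) n \<subseteq> centralizer G N"
    by (auto simp: centralizer_def dest: subgroup.mem_carrier[OF N(1)])
  then have "lower_central (G\<lparr>carrier := N\<rparr>) 0 \<subseteq> centralizer G N"
    using inc_induct[of 0 n "\<lambda>j. lower_central (G\<lparr>carrier := N\<rparr>) j \<subseteq> centralizer G N"]
      lower_central_centralizer_step[OF K N] by blast
  then show ?thesis by simp
qed

lemma Fitting_normal: "Fitting G \<lhd> G"
  unfolding Fitting_def
proof (rule normal_generateI)
  show "\<Union>{N. N \<lhd> G \<and> nilpotent_grp (G\<lparr>carrier := N\<rparr>)} \<subseteq> carrier G"
    using normal_imp_subgroup subgroup.subset by blast
next
  fix h g assume "h \<in> \<Union>{N. N \<lhd> G \<and> nilpotent_grp (G\<lparr>carrier := N\<rparr>)}" and g: "g \<in> carrier G"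
  then obtain N where N: "N \<lhd> G" "nilpotent_grp (G\<lparr>carrier := N\<rparr>)" "h \<in> N" by blast
  then have "g \<otimes> h \<otimes> inv g \<in> N" using normal.inv_op_closed2[OF N(1) g N(3)] by simp
  then show "g \<otimes> h \<otimes> inv g \<in> \<Union>{N. N \<lhd> G \<and> nilpotent_grp (G\<lparr>carrier := N\<rparr>)}"
    using N by blast
qed

lemma Fitting_subgroup: "subgroup (Fitting G) G"
  using normal_imp_subgroup[OF Fitting_normal] .

lemma nilpotent_normal_subset_Fitting:
  assumes "N \<lhd> G" "nilpotent_grp (G\<lparr>carrier := N\<rparr>)"
  shows "N \<subseteq> Fitting G"
  unfolding Fitting_def using assms by (blast intro: generate.incl)

lemma Fitting_commute:
  assumes fin: "finite (carrier G)" and sq: "squarefree (card (Fitting G))"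
    and x: "x \<in> Fitting G" and y: "y \<in> Fitting G"
  shows "x \<otimes> y = y \<otimes> x"
proof -
  define S where "S = \<Union>{N. N \<lhd> G \<and> nilpotent_grp (G\<lparr>carrier := N\<rparr>)}"
  have K: "subgroup (Fitting G) G" "finite (Fitting G)" "squarefree (card (Fitting G))"
    using Fitting_subgroup finite_subset[OF subgroup.subset[OF Fitting_subgroup] fin] sq by auto
  have S: "S \<subseteq> carrier G" unfolding S_def using normal_imp_subgroup subgroup.subset by blast
  have "a \<otimes> b = b \<otimes> a" if "a \<in> S" "b \<in> S" for a b
  proof -
    obtain A where A: "A \<lhd> G" "nilpotent_grp (G\<lparr>carrier := A\<rparr>)" "a \<in> A"
      using \<open>a \<in> S\<close> unfolding S_def by blast
    obtain B where B: "B \<lhd> G" "nilpotent_grp (G\<lparr>carrier := B\<rparr>)" "b \<in> B"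
      using \<open>b \<in> S\<close> unfolding S_def by blast
    have AB: "subgroup A G" "subgroup B G" "A \<subseteq> Fitting G" "B \<subseteq> Fitting G"
      using A B normal_imp_subgroup nilpotent_normal_subset_Fitting by auto
    have ac: "a \<in> carrier G" and bc: "b \<in> carrier G"
      using A(3) B(3) AB subgroup.mem_carrier by metis+
    define c where "c = a \<otimes> b \<otimes> inv a \<otimes> inv b"
    have "c = a \<otimes> (b \<otimes> inv a \<otimes> inv b)" using ac bc by (simp add: c_def m_assoc)
    then have cA: "c \<in> A"
      using normal.inv_op_closed2[OF A(1) bc subgroup.m_inv_closed[OF AB(1) A(3)]]
        subgroup.m_closed[OF AB(1) A(3)] by simp
    have cB: "c \<in> B"
      using normal.inv_op_closed2[OF B(1) ac B(3)] subgroup.m_inv_closed[OF AB(2) B(3)]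
        subgroup.m_closed[OF AB(2)] c_def by simp
    have "c \<otimes> a = a \<otimes> c" "c \<otimes> b = b \<otimes> c"
      using nilpotent_subgroup_abelian[OF K AB(1) AB(3) A(2)] cA A(3)
        nilpotent_subgroup_abelian[OF K AB(2) AB(4) B(2)] cB B(3)
      by (auto simp: centralizer_def)
    then have "c = \<one>" using commutator_central_trivial[OF K _ _ c_def] A(3) B(3) AB by auto
    then show ?thesis using commutator_one_iff[OF ac bc] c_def by simp
  qed
  then show ?thesis using generate_commute[OF S] x y unfolding Fitting_def S_def by blast
qed

lemma normal_centralizer:
  assumes N: "N \<lhd> G"
  shows "centralizer G N \<lhd> G"
proof -
  have NG: "N \<subseteq> carrier G" using normal_imp_subgroup[OF N] subgroup.subset by blast
  have "g \<otimes> x \<otimes> inv g \<in> centralizer G N" if g: "g \<in> carrier G" and x: "x \<in> centralizer G N" for g x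
  proof -
    have xc: "x \<in> carrier G" using x by (simp add: centralizer_def)
    have "(g \<otimes> x \<otimes> inv g) \<otimes> f = f \<otimes> (g \<otimes> x \<otimes> inv g)" if f: "f \<in> N" for f
    proof -
      have fc: "f \<in> carrier G" using f NG by auto
      have "inv g \<otimes> f \<otimes> g \<in> N" using normal.inv_op_closed1[OF N g f] .
      then have com: "x \<otimes> (inv g \<otimes> f \<otimes> g) = (inv g \<otimes> f \<otimes> g) \<otimes> x"
        using x by (simp add: centralizer_def)
      have "(g \<otimes> x \<otimes> inv g) \<otimes> f = g \<otimes> (x \<otimes> (inv g \<otimes> f \<otimes> g)) \<otimes> inv g"
        using g xc fc by (simp add: m_assoc)
      also have "\<dots> = g \<otimes> ((inv g \<otimes> f \<otimes> g) \<otimes> x) \<otimes> inv g" using com by simp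
      also have "\<dots> = f \<otimes> (g \<otimes> x \<otimes> inv g)" using g xc fc by (simp add: m_assoc[symmetric])
      finally show ?thesis .
    qed
    then show ?thesis using g xc by (simp add: centralizer_def)
  qed
  then show ?thesis using normal_inv_iff subgroup_centralizer[OF NG] by blast
qed

lemma centralizer_Fitting_subset:
  assumes "solvable G"
  shows "centralizer G (Fitting G) \<subseteq> Fitting G"
proof (rule ccontr)
  let ?F = "Fitting G" and ?C = "centralizer G (Fitting G)"
  define D where "D i = (derived G ^^ i) (carrier G)" for i
  define A where "A i = D i \<inter> ?C" for i
  assume C_not_F: "\<not> ?C \<subseteq> ?F"
  have FG: "?F \<subseteq> carrier G" using Fitting_subgroup subgroup.subset by blast
  have C: "subgroup ?C G" using subgroup_centralizer[OF FG] .
  have D_normal: "D i \<lhd> G" for i by (induct i) (simp_all add: D_def normal_self derived_is_normal)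
  have A_normal: "A i \<lhd> G" for i
    using normal_subgroup_intersect[OF D_normal normal_centralizer[OF Fitting_normal]] A_def by simp
  obtain n where "D n = {\<one>}" using assms solvable_iff_trivial_derived_seq D_def by blast
  then have "A n \<subseteq> ?F" using A_def subgroup.one_closed[OF Fitting_subgroup] by auto
  define j where "j = (LEAST j. A j \<subseteq> ?F)"
  have AjF: "A j \<subseteq> ?F" using LeastI[of "\<lambda>j. A j \<subseteq> ?F", OF \<open>A n \<subseteq> ?F\<close>] j_def by simp
  have "A 0 = ?C" using A_def D_def subgroup.subset[OF C] by auto
  then have "j \<noteq> 0" using AjF C_not_F by auto
  then obtain i where j: "j = Suc i" by (cases j) auto
  have "\<not> A i \<subseteq> ?F" using not_less_Least[of i "\<lambda>j. A j \<subseteq> ?F"] j_def j by auto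
  moreover have "nilpotent_grp (G\<lparr>carrier := A i\<rparr>)"
  proof (rule nilpotent_grp_class_two[OF normal_imp_subgroup[OF A_normal] Fitting_subgroup])
    show "?F \<subseteq> centralizer G (A i)" using A_def FG by (auto simp: centralizer_def)
  next
    fix a b assume ab: "a \<in> A i" "b \<in> A i"
    then have "a \<otimes> b \<otimes> inv a \<otimes> inv b \<in> derived_set G (D i)" unfolding A_def by blast
    then have "a \<otimes> b \<otimes> inv a \<otimes> inv b \<in> derived G (D i)"
      unfolding derived_def by (rule generate.incl)
    moreover have "a \<otimes> b \<otimes> inv a \<otimes> inv b \<in> ?C"
      using ab C A_def by (simp add: subgroup.m_closed subgroup.m_inv_closed)
    ultimately have "a \<otimes> b \<otimes> inv a \<otimes> inv b \<in> A j" using A_def D_def j by simp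
    then show "a \<otimes> b \<otimes> inv a \<otimes> inv b \<in> ?F" using AjF by auto
  qed
  ultimately show False using nilpotent_normal_subset_Fitting[OF A_normal] by blast
qed

end

section \<open>Conjugation on a Fitting subgroup of square-free order\<close>

context group
begin

lemma conj_hom:
  assumes g: "g \<in> carrier G"
  shows "(\<lambda>x. g \<otimes> x \<otimes> inv g) \<in> hom G G"
proof (rule homI)
  fix x y assume x: "x \<in> carrier G" and y: "y \<in> carrier G"
  have "g \<otimes> x \<otimes> inv g \<otimes> (g \<otimes> y \<otimes> inv g) = g \<otimes> x \<otimes> (inv g \<otimes> g) \<otimes> (y \<otimes> inv g)"
    using g x y by (simp only: m_assoc inv_closed m_closed)
  then show "g \<otimes> (x \<otimes> y) \<otimes> inv g = g \<otimes> x \<otimes> inv g \<otimes> (g \<otimes> y \<otimes> inv g)"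
    using g x y by (simp add: m_assoc)
qed (use g in simp)

lemma conj_int_pow:
  assumes "g \<in> carrier G" "x \<in> carrier G"
  shows "g \<otimes> x [^] (k::int) \<otimes> inv g = (g \<otimes> x \<otimes> inv g) [^] k"
  using hom_int_pow[OF conj_hom[OF assms(1)] assms(2) is_group is_group] .

lemma conj_eq_one_iff:
  assumes "g \<in> carrier G" "x \<in> carrier G"
  shows "g \<otimes> x \<otimes> inv g = \<one> \<longleftrightarrow> x = \<one>"
  using assms inv_solve_right[of "\<one>" "g \<otimes> x" g] l_cancel_one[of g x] by (simp add: eq_commute)

lemma conj_mult:
  assumes "a \<in> carrier G" "b \<in> carrier G" "x \<in> carrier G"
  shows "(a \<otimes> b) \<otimes> x \<otimes> inv (a \<otimes> b) = a \<otimes> (b \<otimes> x \<otimes> inv b) \<otimes> inv a"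
  using assms by (simp add: inv_mult_group m_assoc)

lemma conj_inv_conj:
  assumes "g \<in> carrier G" "x \<in> carrier G"
  shows "inv g \<otimes> (g \<otimes> x \<otimes> inv g) \<otimes> g = x"
proof -
  have "inv g \<otimes> (g \<otimes> x \<otimes> inv g) \<otimes> g = inv g \<otimes> (g \<otimes> x)"
    using assms by (simp add: m_assoc)
  also have "\<dots> = x" using assms by (simp add: m_assoc[symmetric])
  finally show ?thesis .
qed

lemma conj_eq_iff_commute:
  assumes "g \<in> carrier G" "x \<in> carrier G"
  shows "g \<otimes> x \<otimes> inv g = x \<longleftrightarrow> g \<otimes> x = x \<otimes> g"
  using assms by (metis inv_solve_right m_closed)

lemma pow_gcd_mem_subgroup:
  assumes H: "subgroup H G" and y: "y \<in> carrier G"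
  shows "y [^] (m::nat) \<in> H \<Longrightarrow> y [^] n \<in> H \<Longrightarrow> y [^] gcd m n \<in> H"
proof (induct m n rule: gcd_nat_induct)
  case (step m n)
  have "y [^] m = (y [^] n) [^] (m div n) \<otimes> y [^] (m mod n)"
    using y nat_pow_mult[of y "n * (m div n)" "m mod n"] by (simp add: nat_pow_pow)
  then have "y [^] (m mod n) = inv ((y [^] n) [^] (m div n)) \<otimes> y [^] m"
    using y by (simp add: inv_solve_left)
  then have "y [^] (m mod n) \<in> H"
    using step.prems H subgroup_nat_pow_closed by (simp add: subgroup.m_closed subgroup.m_inv_closed)
  then show ?case using step by (simp add: gcd_non_0_nat)
qed simp

lemma pow_mem_subgroup_squarefree:
  assumes H: "subgroup H G" and y: "y \<in> carrier G"
    and d: "squarefree (d::nat)" "0 < d" "y [^] d \<in> H"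
    and cofactors: "\<And>q. Factorial_Ring.prime q \<Longrightarrow> q dvd d \<Longrightarrow> y [^] (d div q) \<in> H"
  shows "y \<in> H"
proof -
  define e :: nat where "e = (LEAST e. 0 < e \<and> y [^] e \<in> H)"
  have e: "0 < e" "y [^] e \<in> H" using LeastI[of "\<lambda>e. 0 < e \<and> y [^] e \<in> H" d] d e_def by auto
  have e_dvd: "e dvd a" if "y [^] a \<in> H" for a
  proof -
    have "0 < gcd e a \<and> y [^] gcd e a \<in> H" using pow_gcd_mem_subgroup[OF H y e(2) that] e(1) by simp
    then have "e \<le> gcd e a" unfolding e_def by (rule Least_le)
    then have "gcd e a = e" using e(1) by (meson dvd_imp_le gcd_dvd1 le_antisym)
    then show ?thesis by (metis gcd_dvd2)
  qed
  have "e = 1"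
  proof (rule ccontr)
    assume "e \<noteq> 1"
    then obtain q where q: "Factorial_Ring.prime q" "q dvd e" using prime_factor_nat by blast
    have "q dvd d" using q(2) e_dvd[OF d(3)] by (rule dvd_trans)
    moreover have "q dvd d div q" using q(2) e_dvd[OF cofactors[OF q(1)]] \<open>q dvd d\<close> dvd_trans by blast
    ultimately have "q ^ 2 dvd d" by (metis dvd_div_iff_mult power2_eq_square q(1) not_prime_0)
    then have "is_unit q" using d(1) squarefreeD by blast
    with q(1) show False by simp
  qed
  then show ?thesis using e y by simp
qed

lemma Fitting_conj_in_cyclic:
  assumes fin: "finite (carrier G)" and sq: "squarefree (card (Fitting G))"
    and g: "g \<in> carrier G" and f: "f \<in> Fitting G"
  shows "g \<otimes> f \<otimes> inv g \<in> generate G {f}"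
proof -
  let ?F = "Fitting G"
  define y where "y = g \<otimes> f \<otimes> inv g"
  define d where "d = ord f"
  have F: "subgroup ?F G" "finite ?F"
    by (rule Fitting_subgroup, rule finite_subset[OF subgroup.subset[OF Fitting_subgroup] fin])
  have fc: "f \<in> carrier G" using subgroup.mem_carrier[OF F(1) f] .
  have yF: "y \<in> ?F" using normal.inv_op_closed2[OF Fitting_normal g f] y_def by simp
  have yc: "y \<in> carrier G" using y_def g fc by simp
  have gen_f: "subgroup (generate G {f}) G" using generate_is_subgroup fc by simp
  have y_pow: "y [^] (n::nat) = g \<otimes> f [^] n \<otimes> inv g" for n
    using conj_int_pow[OF g fc, of "int n"] y_def by (simp add: int_pow_int)
  have "d dvd card ?F" using pow_card_subgroup[OF F(1) f] pow_eq_id[OF fc] d_def by simp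
  then have sqd: "squarefree d" using squarefree_mono sq by blast
  have d0: "0 < d" using ord_ge_1[OF fin fc] d_def by simp
  have fd: "f [^] d = \<one>" using d_def fc by simp
  then have yd: "y [^] d = \<one>" using y_pow[of d] g by simp
  have "y [^] (d div q) \<in> generate G {f}" if q: "Factorial_Ring.prime q" "q dvd d" for q
  proof -
    define k where "k = d div q"
    have dk: "d = k * q" using q k_def by simp
    have "0 < k" "k < d" using dk d0 prime_gt_1_nat[OF q(1)] by auto
    then have "f [^] k \<noteq> \<one>" using pow_eq_id[OF fc] d_def by (auto dest: dvd_imp_le)
    moreover have "(f [^] k) [^] q = \<one>" "(y [^] k) [^] q = \<one>"
      using fd yd fc yc by (simp_all add: nat_pow_pow dk)
    moreover have "f [^] k \<in> ?F" "y [^] k \<in> ?F"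
      using subgroup_nat_pow_closed[OF F(1)] f yF by auto
    ultimately have "y [^] k \<in> generate G {f [^] k}"
      using commuting_order_p_in_cyclic[OF F sq, of "f [^] k" "y [^] k" q] Fitting_commute[OF fin sq] q(1)
      by blast
    moreover have "generate G {f [^] k} \<subseteq> generate G {f}"
      using generate_subgroup_incl[OF _ gen_f] subgroup_nat_pow_closed[OF gen_f] generate.incl[of f "{f}" G]
      by simp
    ultimately show ?thesis using k_def by auto
  qed
  then have "y \<in> generate G {f}"
    using pow_mem_subgroup_squarefree[OF gen_f yc sqd d0] yd generate.one[of G "{f}"] by simp
  then show ?thesis using y_def by simp
qed

lemma Fitting_conj_commute:
  assumes fin: "finite (carrier G)" and sq: "squarefree (card (Fitting G))"
    and g: "g \<in> carrier G" and h: "h \<in> carrier G" and f: "f \<in> Fitting G"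
  shows "g \<otimes> (h \<otimes> f \<otimes> inv h) \<otimes> inv g = h \<otimes> (g \<otimes> f \<otimes> inv g) \<otimes> inv h"
proof -
  have fc: "f \<in> carrier G" using f subgroup.mem_carrier[OF Fitting_subgroup] by simp
  obtain k :: int where k: "g \<otimes> f \<otimes> inv g = f [^] k"
    using Fitting_conj_in_cyclic[OF fin sq g f] generate_pow[OF fc] by blast
  obtain l :: int where l: "h \<otimes> f \<otimes> inv h = f [^] l"
    using Fitting_conj_in_cyclic[OF fin sq h f] generate_pow[OF fc] by blast
  have "g \<otimes> (h \<otimes> f \<otimes> inv h) \<otimes> inv g = (g \<otimes> f \<otimes> inv g) [^] l"
    using l conj_int_pow[OF g fc] by simp
  also have "\<dots> = (f [^] l) [^] k" using k fc by (simp add: int_pow_pow mult.commute)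
  also have "\<dots> = h \<otimes> (g \<otimes> f \<otimes> inv g) \<otimes> inv h" using k l conj_int_pow[OF h fc] by simp
  finally show ?thesis .
qed

end

section \<open>Permutation groups\<close>

definition perm_orbit :: "('a \<Rightarrow> 'a) set \<Rightarrow> 'a \<Rightarrow> 'a set" where
  "perm_orbit H x = (\<lambda>h. h x) ` H"

lemma vertex_orbits_eq: "vertex_orbits H V = perm_orbit H ` V"
  by (auto simp: vertex_orbits_def perm_orbit_def)

locale perm_group =
  fixes V :: "'a set" and G :: "('a \<Rightarrow> 'a) set"
  assumes finite_V: "finite V" and subgroup_Bij: "subgroup G (BijGroup V)"
begin

definition Aut :: "('a \<Rightarrow> 'a) monoid" where "Aut = (BijGroup V)\<lparr>carrier := G\<rparr>"

lemma carrier_Aut [simp]: "carrier Aut = G"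
  by (simp add: Aut_def)

sublocale Aut: group Aut
  using subgroup.subgroup_is_group[OF subgroup_Bij group_BijGroup] by (simp add: Aut_def)

lemma perm_Bij: "g \<in> G \<Longrightarrow> g \<in> Bij V"
  using subgroup.subset[OF subgroup_Bij] by (auto simp: BijGroup_def)

lemma perm_closed [simp]: "g \<in> G \<Longrightarrow> x \<in> V \<Longrightarrow> g x \<in> V"
  using perm_Bij Bij_imp_funcset by blast

lemma mult_apply [simp]: "g \<in> G \<Longrightarrow> h \<in> G \<Longrightarrow> x \<in> V \<Longrightarrow> (g \<otimes>\<^bsub>Aut\<^esub> h) x = g (h x)"
  using perm_Bij by (simp add: Aut_def BijGroup_def compose_def)

lemma perm_mult_closed [simp]: "g \<in> G \<Longrightarrow> h \<in> G \<Longrightarrow> g \<otimes>\<^bsub>Aut\<^esub> h \<in> G"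
  using Aut.m_closed by simp

lemma perm_inv_closed [simp]: "g \<in> G \<Longrightarrow> inv\<^bsub>Aut\<^esub> g \<in> G"
  using Aut.inv_closed by simp

lemma one_apply [simp]: "x \<in> V \<Longrightarrow> \<one>\<^bsub>Aut\<^esub> x = x"
  by (simp add: Aut_def BijGroup_def)

lemma inv_eq_inv_into: "g \<in> G \<Longrightarrow> inv\<^bsub>Aut\<^esub> g = restrict (inv_into V g) V"
  using group.m_inv_consistent[OF group_BijGroup subgroup_Bij] inv_BijGroup perm_Bij
  unfolding Aut_def by metis

lemma inv_apply [simp]: "g \<in> G \<Longrightarrow> x \<in> V \<Longrightarrow> (inv\<^bsub>Aut\<^esub> g) (g x) = x"
  using perm_Bij[of g] bij_betw_inv_into_left[of g V V x] by (simp add: inv_eq_inv_into Bij_def)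

lemma apply_inv [simp]: "g \<in> G \<Longrightarrow> x \<in> V \<Longrightarrow> g ((inv\<^bsub>Aut\<^esub> g) x) = x"
  using perm_Bij[of g] bij_betw_inv_into_right[of g V V x] by (simp add: inv_eq_inv_into Bij_def)

lemma perm_eqI:
  assumes "g \<in> G" "h \<in> G" "\<And>x. x \<in> V \<Longrightarrow> g x = h x"
  shows "g = h"
  using extensionalityI[OF Bij_imp_extensional Bij_imp_extensional] perm_Bij assms by metis

lemma conj_apply [simp]:
  "g \<in> G \<Longrightarrow> f \<in> G \<Longrightarrow> x \<in> V \<Longrightarrow> (g \<otimes>\<^bsub>Aut\<^esub> f \<otimes>\<^bsub>Aut\<^esub> inv\<^bsub>Aut\<^esub> g) (g x) = g (f x)"
  by simp

lemma finite_G: "finite G"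
proof -
  have "G \<subseteq> V \<rightarrow>\<^sub>E V"
  proof
    fix g assume "g \<in> G"
    then show "g \<in> V \<rightarrow>\<^sub>E V"
      using Bij_imp_funcset[OF perm_Bij] Bij_imp_extensional[OF perm_Bij] by (simp add: PiE_def)
  qed
  moreover have "finite (V \<rightarrow>\<^sub>E V)" using finite_V by (simp add: finite_PiE)
  ultimately show ?thesis using finite_subset by blast
qed

lemma subgroup_stabilizer: "x \<in> V \<Longrightarrow> subgroup {g \<in> G. g x = x} Aut"
proof (rule Aut.subgroupI)
  fix g assume "x \<in> V" "g \<in> {g \<in> G. g x = x}"
  then show "inv\<^bsub>Aut\<^esub> g \<in> {g \<in> G. g x = x}" using inv_apply[of g x] by simp
qed (use Aut.one_closed in auto)

lemma perm_orbit_refl: "subgroup H Aut \<Longrightarrow> x \<in> V \<Longrightarrow> x \<in> perm_orbit H x"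
  using subgroup.one_closed one_apply unfolding perm_orbit_def by (metis image_eqI)

lemma perm_orbit_eq:
  assumes H: "subgroup H Aut" and x: "x \<in> V" and y: "y \<in> perm_orbit H x"
  shows "perm_orbit H y = perm_orbit H x"
proof -
  obtain f where f: "f \<in> H" "y = f x" using y by (auto simp: perm_orbit_def)
  have HG: "\<And>h. h \<in> H \<Longrightarrow> h \<in> G" using subgroup.mem_carrier[OF H] by simp
  have "h y \<in> perm_orbit H x" if "h \<in> H" for h
    using f that H HG x subgroup.m_closed[OF H]
    by (auto simp: perm_orbit_def intro!: image_eqI[of _ _ "h \<otimes>\<^bsub>Aut\<^esub> f"])
  moreover have "h x \<in> perm_orbit H y" if "h \<in> H" for h
    using f that H HG x subgroup.m_closed[OF H] subgroup.m_inv_closed[OF H]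
    by (auto simp: perm_orbit_def intro!: image_eqI[of _ _ "h \<otimes>\<^bsub>Aut\<^esub> inv\<^bsub>Aut\<^esub> f"])
  ultimately show ?thesis unfolding perm_orbit_def by blast
qed

lemma perm_orbit_conj:
  assumes H: "H \<lhd> Aut" and g: "g \<in> G" and x: "x \<in> V" and y: "y \<in> perm_orbit H x"
  shows "g y \<in> perm_orbit H (g x)"
proof -
  obtain f where f: "f \<in> H" "y = f x" using y by (auto simp: perm_orbit_def)
  have "g \<otimes>\<^bsub>Aut\<^esub> f \<otimes>\<^bsub>Aut\<^esub> inv\<^bsub>Aut\<^esub> g \<in> H" using normal.inv_op_closed2[OF H] g f by simp
  moreover have "f \<in> G" using f H normal_imp_subgroup subgroup.mem_carrier by fastforce
  then have "(g \<otimes>\<^bsub>Aut\<^esub> f \<otimes>\<^bsub>Aut\<^esub> inv\<^bsub>Aut\<^esub> g) (g x) = g y" using f g x by simp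
  ultimately show ?thesis unfolding perm_orbit_def by (metis image_eqI)
qed

lemma abelian_normal_semiregular:
  assumes trans: "\<And>u v. u \<in> V \<Longrightarrow> v \<in> V \<Longrightarrow> \<exists>g\<in>G. g u = v"
    and N: "N \<lhd> Aut" "squarefree (card N)"
    and comm: "\<And>a b. a \<in> N \<Longrightarrow> b \<in> N \<Longrightarrow> a \<otimes>\<^bsub>Aut\<^esub> b = b \<otimes>\<^bsub>Aut\<^esub> a"
    and f: "f \<in> N" and x: "x \<in> V" "f x = x"
  shows "f = \<one>\<^bsub>Aut\<^esub>"
proof (rule ccontr)
  assume "f \<noteq> \<one>\<^bsub>Aut\<^esub>"
  have N_sub: "subgroup N Aut" using normal_imp_subgroup[OF N(1)] .
  have NG: "\<And>h. h \<in> N \<Longrightarrow> h \<in> G" using subgroup.mem_carrier[OF N_sub] by simp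
  have N_fin: "finite N" using finite_subset[OF _ finite_G] NG by blast
  obtain p k :: nat where p: "Factorial_Ring.prime p" and a1: "f [^]\<^bsub>Aut\<^esub> k \<noteq> \<one>\<^bsub>Aut\<^esub>"
    and ap: "(f [^]\<^bsub>Aut\<^esub> k) [^]\<^bsub>Aut\<^esub> p = \<one>\<^bsub>Aut\<^esub>"
    using Aut.exists_prime_order_power[of f] finite_G NG[OF f] \<open>f \<noteq> _\<close> by auto
  define a where "a = f [^]\<^bsub>Aut\<^esub> k"
  have aN: "a \<in> N" using Aut.subgroup_nat_pow_closed[OF N_sub f] a_def by simp
  have "a v = v" if v: "v \<in> V" for v
    \<comment> \<open>a lies in the cyclic group generated by a conjugate of a that fixes v\<close>
  proof -
    obtain t where t: "t \<in> G" "t x = v" using trans x(1) v by blast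
    define b where "b = t \<otimes>\<^bsub>Aut\<^esub> a \<otimes>\<^bsub>Aut\<^esub> inv\<^bsub>Aut\<^esub> t"
    have bN: "b \<in> N" using normal.inv_op_closed2[OF N(1)] t aN b_def by simp
    have "a x = x"
      using Aut.subgroup_nat_pow_closed[OF subgroup_stabilizer[OF x(1)], of f k] NG[OF f] x a_def
      by simp
    then have "b v = v" using t NG[OF aN] x b_def by (metis conj_apply)
    have "b [^]\<^bsub>Aut\<^esub> p = \<one>\<^bsub>Aut\<^esub>"
      using Aut.conj_int_pow[of t a "int p"] ap t NG[OF aN] a_def b_def by (simp add: int_pow_int)
    moreover have "b \<noteq> \<one>\<^bsub>Aut\<^esub>"
      using a1 t NG[OF aN] Aut.conj_eq_one_iff[of t a] a_def b_def by simp
    ultimately have "a \<in> generate Aut {b}"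
      using Aut.commuting_order_p_in_cyclic[OF N_sub N_fin N(2) bN aN comm[OF bN aN] p] ap
      unfolding a_def by simp
    moreover have "generate Aut {b} \<subseteq> {g \<in> G. g v = v}"
      using Aut.generate_subgroup_incl[OF _ subgroup_stabilizer[OF v]] NG[OF bN] \<open>b v = v\<close> by simp
    ultimately show ?thesis by blast
  qed
  then have "a = \<one>\<^bsub>Aut\<^esub>" using perm_eqI[OF NG[OF aN] Aut.one_closed[simplified]] by simp
  then show False using a1 a_def by simp
qed

end

section \<open>Graphs with a group of automorphisms\<close>

locale graph_aut = perm_group V G for V :: "'a set" and G +
  fixes adj :: "'a \<Rightarrow> 'a \<Rightarrow> bool"
  assumes simple: "simple_graph V adj"
    and adj_aut: "\<And>g x y. g \<in> G \<Longrightarrow> x \<in> V \<Longrightarrow> y \<in> V \<Longrightarrow> adj (g x) (g y) \<longleftrightarrow> adj x y"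
begin

lemma adj_in_V: "adj x y \<Longrightarrow> x \<in> V \<and> y \<in> V"
  using simple unfolding simple_graph_def by blast

lemma adj_sym: "adj x y \<Longrightarrow> adj y x"
  using simple unfolding simple_graph_def by blast

lemma adj_irrefl: "\<not> adj x x"
  using simple unfolding simple_graph_def by blast

lemma reach_aut_imp:
  "g \<in> G \<Longrightarrow> x \<in> V \<Longrightarrow> reach adj k x y \<Longrightarrow> reach adj k (g x) (g y)"
proof (induct k arbitrary: x)
  case (Suc k)
  then obtain z where z: "adj x z" "reach adj k z y" by auto
  then have "adj (g x) (g z)" using adj_aut adj_in_V Suc.prems by blast
  then show ?case using Suc z adj_in_V by auto
qed simp

lemma reach_aut:
  "g \<in> G \<Longrightarrow> x \<in> V \<Longrightarrow> y \<in> V \<Longrightarrow> reach adj k (g x) (g y) \<longleftrightarrow> reach adj k x y"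
  using reach_aut_imp[of "inv\<^bsub>Aut\<^esub> g" "g x" k "g y"] reach_aut_imp[of g x k y] by auto

lemma sphere_aut:
  "g \<in> G \<Longrightarrow> x \<in> V \<Longrightarrow> v \<in> V \<Longrightarrow> g v \<in> sphere V adj i (g x) \<longleftrightarrow> v \<in> sphere V adj i x"
  unfolding sphere_def using reach_aut by auto

lemma sphere_1_iff: "v \<in> sphere V adj 1 x \<longleftrightarrow> adj x v"
  unfolding sphere_def using adj_in_V adj_irrefl by auto

lemma sphere_2_iff:
  "v \<in> sphere V adj 2 x \<longleftrightarrow> v \<noteq> x \<and> \<not> adj x v \<and> (\<exists>y. adj x y \<and> adj y v)"
  unfolding sphere_def by (auto simp: numeral_2_eq_2 less_Suc_eq dest: adj_in_V)

lemma reach_two_steps: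
  "reach adj k x v \<Longrightarrow> x \<noteq> v \<Longrightarrow> \<not> adj x v \<Longrightarrow> \<exists>y z. adj x y \<and> adj y z \<and> z \<noteq> x"
proof (induct k arbitrary: x rule: less_induct)
  case (less k)
  have "k \<noteq> 0" "k \<noteq> 1" using less.prems by (auto elim: reach.elims)
  then obtain k' where k': "k = Suc (Suc k')" by (metis One_nat_def not0_implies_Suc)
  then obtain y z where yz: "adj x y" "adj y z" "reach adj k' z v" using less.prems(1) by auto
  show ?case
  proof (cases "z = x")
    case True
    then show ?thesis using less.hyps[of k' x] k' yz less.prems(2,3) by auto
  qed (use yz in blast)
qed

end

section \<open>A Fitting subgroup with two orbits\<close>

locale two_orbit_Fitting = graph_aut +
  assumes connected: "connected_graph V adj"
    and dist2: "dist2_transitive V adj G"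
    and solvable: "solvable Aut"
    and squarefree_Fitting: "squarefree (card (Fitting Aut))"
    and two_orbits: "card (vertex_orbits (Fitting Aut) V) = 2"
begin

abbreviation F where "F \<equiv> Fitting Aut"
abbreviation orb where "orb \<equiv> perm_orbit F"

lemma vertex_transitive: "u \<in> V \<Longrightarrow> v \<in> V \<Longrightarrow> \<exists>g\<in>G. g u = v"
  using dist2 unfolding dist2_transitive_def by blast

lemma stabilizer_transitive:
  "u \<in> V \<Longrightarrow> i \<in> {1, 2} \<Longrightarrow> v \<in> sphere V adj i u \<Longrightarrow> w \<in> sphere V adj i u
    \<Longrightarrow> \<exists>g\<in>G. g u = u \<and> g v = w"
  using dist2 unfolding dist2_transitive_def by blast

lemma F_subgroup: "subgroup F Aut"
  by (rule Aut.Fitting_subgroup)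

lemma F_in_G: "f \<in> F \<Longrightarrow> f \<in> G"
  using subgroup.mem_carrier[OF F_subgroup] by simp

lemma F_commute: "f \<in> F \<Longrightarrow> h \<in> F \<Longrightarrow> f \<otimes>\<^bsub>Aut\<^esub> h = h \<otimes>\<^bsub>Aut\<^esub> f"
  using Aut.Fitting_commute finite_G squarefree_Fitting by simp

lemma F_semiregular:
  assumes f: "f \<in> F" and h: "h \<in> F" and x: "x \<in> V" and fh: "f x = h x"
  shows "f = h"
proof -
  have hf: "inv\<^bsub>Aut\<^esub> h \<otimes>\<^bsub>Aut\<^esub> f \<in> F"
    using F_subgroup f h by (simp add: subgroup.m_closed subgroup.m_inv_closed)
  have "(inv\<^bsub>Aut\<^esub> h \<otimes>\<^bsub>Aut\<^esub> f) x = x" using f h x fh F_in_G by simp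
  then have "inv\<^bsub>Aut\<^esub> h \<otimes>\<^bsub>Aut\<^esub> f = \<one>\<^bsub>Aut\<^esub>"
    using abelian_normal_semiregular[OF vertex_transitive Aut.Fitting_normal squarefree_Fitting
        F_commute hf x] by blast
  then have "h \<otimes>\<^bsub>Aut\<^esub> (inv\<^bsub>Aut\<^esub> h \<otimes>\<^bsub>Aut\<^esub> f) = h" using h F_in_G by simp
  then show ?thesis using f h F_in_G by (simp add: Aut.m_assoc[symmetric])
qed

lemma orb_refl: "x \<in> V \<Longrightarrow> x \<in> orb x"
  using perm_orbit_refl[OF F_subgroup] .

lemma orb_eq: "x \<in> V \<Longrightarrow> y \<in> orb x \<Longrightarrow> orb y = orb x"
  using perm_orbit_eq[OF F_subgroup] .

lemma orb_conj: "g \<in> G \<Longrightarrow> x \<in> V \<Longrightarrow> y \<in> orb x \<Longrightarrow> g y \<in> orb (g x)"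
  using perm_orbit_conj[OF Aut.Fitting_normal] .

lemma in_orb_iff: "y \<in> orb x \<longleftrightarrow> (\<exists>f\<in>F. y = f x)"
  by (auto simp: perm_orbit_def)

lemma two_orbits_other:
  assumes "x \<in> V" "y \<in> V" "z \<in> V" "y \<notin> orb x" "z \<notin> orb x"
  shows "z \<in> orb y"
proof -
  obtain O1 O2 where O: "orb ` V = {O1, O2}"
    using two_orbits unfolding vertex_orbits_eq card_2_iff by blast
  have "orb y \<noteq> orb x" "orb z \<noteq> orb x" using assms orb_refl by metis+
  moreover have "orb x \<in> {O1, O2}" "orb y \<in> {O1, O2}" "orb z \<in> {O1, O2}"
    using assms O by blast+
  ultimately have "orb z = orb y" by blast
  then show ?thesis using orb_refl[OF assms(3)] by simp
qed

lemma exists_crossing_edge: "\<exists>c d. adj c d \<and> d \<notin> orb c"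
proof -
  obtain O1 O2 where O: "orb ` V = {O1, O2}" "O1 \<noteq> O2"
    using two_orbits unfolding vertex_orbits_eq card_2_iff by blast
  then have "O1 \<in> orb ` V" "O2 \<in> orb ` V" by auto
  then obtain u w where uw: "u \<in> V" "w \<in> V" "orb u = O1" "orb w = O2" by blast
  then have "w \<notin> orb u" using orb_eq[OF uw(1)] O(2) by metis
  moreover obtain k where "reach adj k u w" using connected uw unfolding connected_graph_def by blast
  ultimately show ?thesis using uw(1)
  proof (induct k arbitrary: u)
    case (Suc k)
    then obtain y where y: "adj u y" "reach adj k y w" by auto
    show ?case
    proof (cases "y \<in> orb u")
      case True
      then show ?thesis using Suc orb_eq y by (metis adj_in_V)
    qed (use y in blast)
  qed (use orb_refl in auto)
qed

lemma adj_other_orbit: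
  assumes ab: "adj a b"
  shows "b \<notin> orb a"
proof
  assume "b \<in> orb a"
  obtain c d where cd: "adj c d" "d \<notin> orb c" using exists_crossing_edge by blast
  have V: "a \<in> V" "b \<in> V" "c \<in> V" "d \<in> V" using adj_in_V ab cd by auto
  obtain g where g: "g \<in> G" "g a = c" using vertex_transitive V by blast
  have "g b \<in> sphere V adj 1 c" "d \<in> sphere V adj 1 c"
    using adj_aut[OF g(1)] V ab cd g(2) sphere_1_iff by auto
  then obtain h where h: "h \<in> G" "h c = c" "h (g b) = d"
    using stabilizer_transitive[OF V(3)] by blast
  have "h (g b) \<in> orb (h (g a))"
    using orb_conj[OF h(1) _ orb_conj[OF g(1) V(1) \<open>b \<in> orb a\<close>]] g V by simp
  then show False using h g cd by simp
qed

lemma adj_adj_same_orbit: "adj x y \<Longrightarrow> adj y z \<Longrightarrow> z \<in> orb x"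
  using two_orbits_other adj_other_orbit adj_in_V by metis

lemma sphere_2_iff_path:
  "v \<in> sphere V adj 2 x \<longleftrightarrow> v \<noteq> x \<and> (\<exists>y. adj x y \<and> adj y v)"
  using sphere_2_iff adj_adj_same_orbit adj_other_orbit by blast

lemma sphere_2_nonempty:
  assumes u: "u \<in> V"
  shows "\<exists>v. v \<in> sphere V adj 2 u"
proof -
  obtain a b where "a \<in> V" "b \<in> V" "\<forall>j\<le>1. \<not> reach adj j a b"
    using dist2 unfolding dist2_transitive_def by blast
  then have ab: "a \<in> V" "b \<in> V" "\<not> reach adj 0 a b" "\<not> reach adj 1 a b" by auto
  obtain g where g: "g \<in> G" "g a = u" using vertex_transitive[OF ab(1) u] by blast
  have "\<not> reach adj 0 u (g b)" "\<not> reach adj 1 u (g b)"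
    using reach_aut[OF g(1) ab(1,2)] ab(3,4) g(2) by blast+
  then have far: "u \<noteq> g b" "\<not> adj u (g b)" by auto
  obtain k where "reach adj k u (g b)"
    using connected u perm_closed[OF g(1) ab(2)] unfolding connected_graph_def by blast
  then obtain y z where "adj u y" "adj y z" "z \<noteq> u"
    using reach_two_steps far by blast
  then show ?thesis using sphere_2_iff_path by blast
qed

lemma Fitting_sphere_2_transfer:
  assumes f: "f \<in> F" and x: "x \<in> V" and x': "x' \<in> V" "x' \<notin> orb x"
    and fx: "f x \<in> sphere V adj 2 x"
  shows "f x' \<in> sphere V adj 2 x'"
proof -
  obtain y where y: "adj x y" "adj y (f x)" and "f x \<noteq> x" using fx sphere_2_iff_path by auto
  have "y \<in> orb x'" using two_orbits_other[OF x] x' adj_other_orbit[OF y(1)] adj_in_V y(1) by blast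
  then obtain h where h: "h \<in> F" "y = h x'" by (auto simp: in_orb_iff)
  have hG: "h \<in> G" and fG: "f \<in> G" using F_in_G h f by auto
  define z where "z = (inv\<^bsub>Aut\<^esub> h) (f x)"
  have zV: "z \<in> V" using z_def hG fG x by simp
  have "adj (h x') (h z)" using y(2) h(2) z_def hG fG x by simp
  then have "adj x' z" using adj_aut[OF hG x'(1) zV] by simp
  have "z = (inv\<^bsub>Aut\<^esub> h \<otimes>\<^bsub>Aut\<^esub> f) x" using z_def hG fG x by simp
  also have "\<dots> = (f \<otimes>\<^bsub>Aut\<^esub> inv\<^bsub>Aut\<^esub> h) x"
    using F_commute[OF subgroup.m_inv_closed[OF F_subgroup h(1)] f] by simp
  finally have z: "z = f ((inv\<^bsub>Aut\<^esub> h) x)" using hG fG x by simp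
  have hx: "(inv\<^bsub>Aut\<^esub> h) x \<in> V" using hG x by simp
  have "adj ((inv\<^bsub>Aut\<^esub> h) x) x'" using adj_aut[OF hG hx x'(1)] y(1) h(2) hG x by simp
  then have "adj z (f x')" using adj_aut[OF fG hx x'(1)] z by simp
  moreover have "f x' \<noteq> x'"
    using F_semiregular[OF f subgroup.one_closed[OF F_subgroup] x'(1)] \<open>f x \<noteq> x\<close> x x' by auto
  ultimately show ?thesis using \<open>adj x' z\<close> sphere_2_iff_path by blast
qed

lemma Fitting_sphere_2_conjugate:
  assumes u: "u \<in> V" and e: "e\<^sub>0 \<in> F" "e \<in> F"
    and sphere: "e\<^sub>0 u \<in> sphere V adj 2 u" "e u \<in> sphere V adj 2 u"
  shows "\<exists>h\<in>G. h u = u \<and> h \<otimes>\<^bsub>Aut\<^esub> e\<^sub>0 \<otimes>\<^bsub>Aut\<^esub> inv\<^bsub>Aut\<^esub> h = e"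
proof -
  obtain h where h: "h \<in> G" "h u = u" "h (e\<^sub>0 u) = e u"
    using stabilizer_transitive[OF u _ sphere] by blast
  have "h \<otimes>\<^bsub>Aut\<^esub> e\<^sub>0 \<otimes>\<^bsub>Aut\<^esub> inv\<^bsub>Aut\<^esub> h \<in> F"
    using normal.inv_op_closed2[OF Aut.Fitting_normal] h(1) e(1) by simp
  moreover have "(h \<otimes>\<^bsub>Aut\<^esub> e\<^sub>0 \<otimes>\<^bsub>Aut\<^esub> inv\<^bsub>Aut\<^esub> h) u = e u"
    using conj_apply[OF h(1) F_in_G[OF e(1)] u] h by simp
  ultimately show ?thesis using F_semiregular e(2) u h(1,2) by blast
qed

lemma sphere_2_step_closed:
  assumes u: "u \<in> V" and H: "subgroup H Aut" "H \<subseteq> F"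
    and sphere_2: "\<And>e. e \<in> F \<Longrightarrow> e u \<in> sphere V adj 2 u \<Longrightarrow> e \<in> H"
    and f: "f \<in> H" and yz: "adj (f u) y" "adj y z"
  shows "\<exists>f'\<in>H. z = f' u"
proof (cases "z = f u")
  case False
  have fF: "f \<in> F" and fG: "f \<in> G" using f H F_in_G by auto
  have zV: "z \<in> V" using adj_in_V yz by blast
  have "z \<in> orb (f u)" using adj_adj_same_orbit[OF yz] .
  also have "orb (f u) = orb u" using orb_eq[OF u] fF by (auto simp: in_orb_iff)
  finally obtain f' where f': "f' \<in> F" "z = f' u" by (auto simp: in_orb_iff)
  define e where "e = inv\<^bsub>Aut\<^esub> f \<otimes>\<^bsub>Aut\<^esub> f'"
  have "z \<in> sphere V adj 2 (f u)" using sphere_2_iff_path False yz by blast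
  then have "(inv\<^bsub>Aut\<^esub> f) z \<in> sphere V adj 2 u"
    using sphere_aut[of "inv\<^bsub>Aut\<^esub> f" "f u" z 2] fG u zV by simp
  moreover have "e \<in> F"
    using F_subgroup fF f' by (simp add: e_def subgroup.m_closed subgroup.m_inv_closed)
  moreover have "e u = (inv\<^bsub>Aut\<^esub> f) z" using e_def f' fG F_in_G u by simp
  ultimately have "e \<in> H" using sphere_2 by simp
  then have "f \<otimes>\<^bsub>Aut\<^esub> e \<in> H" using subgroup.m_closed[OF H(1) f] by blast
  moreover have "f \<otimes>\<^bsub>Aut\<^esub> e = f'"
    using e_def fG F_in_G[OF f'(1)] by (simp add: Aut.m_assoc[symmetric])
  ultimately show ?thesis using f' by blast
qed (use f in blast)

lemma Fitting_generated_by_sphere_2: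
  assumes u: "u \<in> V" and H: "subgroup H Aut" "H \<subseteq> F"
    and sphere_2: "\<And>e. e \<in> F \<Longrightarrow> e u \<in> sphere V adj 2 u \<Longrightarrow> e \<in> H"
  shows "F \<subseteq> H"
proof
  have reach: "\<exists>f'\<in>H. v = f' u" if "reach adj k (f u) v" "f \<in> H" "v \<in> orb u" for k f v
    using that
  proof (induct k arbitrary: f rule: less_induct)
    case (less k)
    have "orb (f u) = orb u" using orb_eq[OF u] less.prems(2) H(2) by (auto simp: in_orb_iff)
    consider "k = 0" | "k = 1" | k' where "k = Suc (Suc k')" by (metis One_nat_def not0_implies_Suc)
    then show ?case
    proof cases
      case 1
      then show ?thesis using less.prems by auto
    next
      case 2
      then have "adj (f u) v" using less.prems by simp
      then show ?thesis using adj_other_orbit[of "f u" v] \<open>orb (f u) = orb u\<close> less.prems(3) by simp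
    next
      case (3 k')
      then obtain y z where "adj (f u) y" "adj y z" "reach adj k' z v" using less.prems by auto
      moreover obtain f' where "f' \<in> H" "z = f' u"
        using sphere_2_step_closed[OF u H sphere_2 less.prems(2)] calculation by blast
      ultimately show ?thesis using less.hyps[of k' f'] 3 less.prems(3) by auto
    qed
  qed
  fix f assume f: "f \<in> F"
  obtain k where "reach adj k u (f u)"
    using connected u perm_closed[OF F_in_G[OF f] u] unfolding connected_graph_def by blast
  then obtain f' where "f' \<in> H" "f u = f' u"
    using reach[of k "\<one>\<^bsub>Aut\<^esub>" "f u"] subgroup.one_closed[OF H(1)] f u by (auto simp: in_orb_iff)
  then show "f \<in> H" using F_semiregular[OF f _ u] H by auto
qed

lemma centralizer_sphere_2_element:
  assumes u: "u \<in> V" and e\<^sub>0: "e\<^sub>0 \<in> F" "e\<^sub>0 u \<in> sphere V adj 2 u"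
    and c: "c \<in> G" "c \<otimes>\<^bsub>Aut\<^esub> e\<^sub>0 \<otimes>\<^bsub>Aut\<^esub> inv\<^bsub>Aut\<^esub> c = e\<^sub>0"
  shows "c \<in> centralizer Aut F"
proof -
  have "F \<subseteq> F \<inter> centralizer Aut {c}"
  proof (rule Fitting_generated_by_sphere_2[OF u])
    show "subgroup (F \<inter> centralizer Aut {c}) Aut"
      using Aut.subgroups_Inter_pair F_subgroup Aut.subgroup_centralizer c(1) by simp
    fix e assume e: "e \<in> F" "e u \<in> sphere V adj 2 u"
    obtain h where h: "h \<in> G" "h u = u" "h \<otimes>\<^bsub>Aut\<^esub> e\<^sub>0 \<otimes>\<^bsub>Aut\<^esub> inv\<^bsub>Aut\<^esub> h = e"
      using Fitting_sphere_2_conjugate[OF u e\<^sub>0(1) e(1) e\<^sub>0(2) e(2)] by blast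
    have "c \<otimes>\<^bsub>Aut\<^esub> e \<otimes>\<^bsub>Aut\<^esub> inv\<^bsub>Aut\<^esub> c
        = h \<otimes>\<^bsub>Aut\<^esub> (c \<otimes>\<^bsub>Aut\<^esub> e\<^sub>0 \<otimes>\<^bsub>Aut\<^esub> inv\<^bsub>Aut\<^esub> c) \<otimes>\<^bsub>Aut\<^esub> inv\<^bsub>Aut\<^esub> h"
      using Aut.Fitting_conj_commute[OF _ squarefree_Fitting, of c h e\<^sub>0] finite_G c(1) h e\<^sub>0(1)
      by simp
    then have "c \<otimes>\<^bsub>Aut\<^esub> e \<otimes>\<^bsub>Aut\<^esub> inv\<^bsub>Aut\<^esub> c = e" using c(2) h(3) by simp
    then show "e \<in> F \<inter> centralizer Aut {c}"
      using Aut.conj_eq_iff_commute[of c e] c(1) e(1) F_in_G by (auto simp: centralizer_def)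
  qed auto
  then show ?thesis using c(1) by (auto simp: centralizer_def)
qed

theorem two_orbits_contradiction: False
proof -
  obtain u w where uw: "adj u w" using exists_crossing_edge by blast
  have u: "u \<in> V" and w: "w \<in> V" using adj_in_V uw by auto
  obtain t where t: "t \<in> G" "t u = w" using vertex_transitive u w by blast
  obtain e\<^sub>0 where e\<^sub>0: "e\<^sub>0 \<in> F" "e\<^sub>0 u \<in> sphere V adj 2 u"
  proof -
    obtain v where v: "v \<in> sphere V adj 2 u" using sphere_2_nonempty[OF u] by blast
    then have "v \<in> orb u" using sphere_2_iff_path adj_adj_same_orbit by blast
    then show thesis using that v by (auto simp: in_orb_iff)
  qed
  define s where "s = t \<otimes>\<^bsub>Aut\<^esub> e\<^sub>0 \<otimes>\<^bsub>Aut\<^esub> inv\<^bsub>Aut\<^esub> t"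
  have sF: "s \<in> F" using normal.inv_op_closed2[OF Aut.Fitting_normal] t e\<^sub>0 s_def by simp
  have "s w = t (e\<^sub>0 u)" using conj_apply[OF t(1) F_in_G[OF e\<^sub>0(1)] u] t(2) s_def by simp
  then have "s w \<in> sphere V adj 2 w"
    using sphere_aut[OF t(1) u, of "e\<^sub>0 u" 2] e\<^sub>0 t(2) F_in_G u by simp
  then have "s u \<in> sphere V adj 2 u"
    using Fitting_sphere_2_transfer[OF sF w u] adj_other_orbit[OF adj_sym[OF uw]] by blast
  then obtain g where g: "g \<in> G" "g u = u" "g \<otimes>\<^bsub>Aut\<^esub> e\<^sub>0 \<otimes>\<^bsub>Aut\<^esub> inv\<^bsub>Aut\<^esub> g = s"
    using Fitting_sphere_2_conjugate[OF u e\<^sub>0(1) sF e\<^sub>0(2)] by blast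
  define c where "c = inv\<^bsub>Aut\<^esub> g \<otimes>\<^bsub>Aut\<^esub> t"
  have cG: "c \<in> G" using c_def g t by simp
  have "c \<otimes>\<^bsub>Aut\<^esub> e\<^sub>0 \<otimes>\<^bsub>Aut\<^esub> inv\<^bsub>Aut\<^esub> c
      = inv\<^bsub>Aut\<^esub> g \<otimes>\<^bsub>Aut\<^esub> s \<otimes>\<^bsub>Aut\<^esub> inv\<^bsub>Aut\<^esub> (inv\<^bsub>Aut\<^esub> g)"
    using Aut.conj_mult[of "inv\<^bsub>Aut\<^esub> g" t e\<^sub>0] g t F_in_G[OF e\<^sub>0(1)] c_def s_def by simp
  also have "\<dots> = e\<^sub>0" using Aut.conj_inv_conj[of g e\<^sub>0] g F_in_G[OF e\<^sub>0(1)] by simp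
  finally have "c \<in> F"
    using centralizer_sphere_2_element[OF u e\<^sub>0 cG] Aut.centralizer_Fitting_subset[OF solvable]
    by blast
  then have "c u \<in> orb u" by (auto simp: in_orb_iff)
  moreover have "(inv\<^bsub>Aut\<^esub> g) u = u" using inv_apply[OF g(1) u] g(2) by simp
  then have "adj u (c u)" using adj_aut[of "inv\<^bsub>Aut\<^esub> g" u w] uw c_def g t u w by simp
  ultimately show False using adj_other_orbit by blast
qed

end

theorem lemma4p6:
  fixes V :: "'a set" and adj :: "'a \<Rightarrow> 'a \<Rightarrow> bool" and G :: "('a \<Rightarrow> 'a) set"
  assumes "finite V"
    and "simple_graph V adj"
    and "connected_graph V adj"
    and "aut_group V adj G"
    and "dist2_transitive V adj G"
    and "squarefree (card V)"
    and "solvable ((BijGroup V)\<lparr>carrier := G\<rparr>)"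
    and "squarefree (card (Fitting ((BijGroup V)\<lparr>carrier := G\<rparr>)))"
  shows "card (vertex_orbits (Fitting ((BijGroup V)\<lparr>carrier := G\<rparr>)) V) \<noteq> 2"
proof
  assume two: "card (vertex_orbits (Fitting ((BijGroup V)\<lparr>carrier := G\<rparr>)) V) = 2"
  interpret graph_aut V G adj
    using assms(1,2,4) by (simp add: graph_aut_def graph_aut_axioms_def perm_group_def aut_group_def)
  interpret two_orbit_Fitting V G adj
    using assms(3,5,7,8) two by unfold_locales (simp_all add: Aut_def)
  show False by (rule two_orbits_contradiction)
qed

end
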